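(* Let $\beta_\bullet\in\{\beta,\beta_v\}$, with $\rightsquigarrow_U$ the unbiased iteration of surface reduction and $\rightsquigarrow_{pd}$ its parallel version (as in the context). Then: 1. if $M\rightsquigarrow_{pd}N$ then $M\rightsquigarrow_U^*N$; consequently $M\rightsquigarrow_{pd}^*N$ implies $M\rightsquigarrow_U^*N$; 2. if $M\rightsquigarrow_U^*N$ then there exists $N'$ such that $M\rightsquigarrow_{pd}^*N'$ and $N\rightsquigarrow_U^*N'$.
   Context: Terms $\Lambda_{\mathcal O}$: $M::=x\mid\lambda x.M\mid MM\mid\mathsf{op}(M,\dots,M)$ with $\mathsf{op}$ in a (possibly empty) set $\mathcal O$ of operator symbols with fixed arities; values $V::=x\mid\lambda x.M$. Rules $(\lambda x.M)N\mapsto_\beta M\{N/x\}$, $(\lambda x.M)V\mapsto_{\beta_v}M\{V/x\}$; $\to=\to_{\beta_\bullet}$ is the closure under all contexts. Surface reduction $\to_s$: for $\beta$, closure of $\beta$ under head contexts $H::=[\,]\mid\lambda x.H\mid HM$; for $\beta_v$, closure of $\beta_v$ under weak contexts $W::=[\,]\mid WM\mid MW$. $\rightsquigarrow_U$: if $M\to_sM'$ then $M\rightsquigarrow_UM'$; if $M$ is $\to_s$-normal: $\lambda x.P\rightsquigarrow_U\lambda x.P'$ if $P\rightsquigarrow_UP'$; $PQ\rightsquigarrow_UP'Q$ if $P\rightsquigarrow_UP'$; $PQ\rightsquigarrow_UPQ'$ if $Q\rightsquigarrow_UQ'$; $\mathsf{op}(\dots,P_i,\dots)\rightsquigarrow_U\mathsf{op}(\dots,P_i',\dots)$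 if $P_i\rightsquigarrow_UP_i'$. Parallel reduction $\rightsquigarrow_{pd}$: (1) if $M\to_sM'$ then $M\rightsquigarrow_{pd}M'$; (2) if $M$ is $\to$-normal then $M\rightsquigarrow_{pd}M$; (3) otherwise (M is $\to_s$-normal but not $\to$-normal): $\lambda x.P\rightsquigarrow_{pd}\lambda x.P'$ if $P\rightsquigarrow_{pd}P'$; $P_1P_2\rightsquigarrow_{pd}P_1'P_2'$ if $P_1\rightsquigarrow_{pd}P_1'$ and $P_2\rightsquigarrow_{pd}P_2'$; $\mathsf{op}(P_1,\dots,P_k)\rightsquigarrow_{pd}\mathsf{op}(P_1',\dots,P_k')$ if $P_i\rightsquigarrow_{pd}P_i'$ for all $1\le i\le k$. *)

theory Defs
  imports Main
begin

datatype 'op trm = Var nat | Lam "'op trm" | App "'op trm" "'op trm" | Op 'op "'op trm list"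

fun wf_trm :: "'op set \<Rightarrow> ('op \<Rightarrow> nat) \<Rightarrow> 'op trm \<Rightarrow> bool" where
  "wf_trm Ops ar (Var i) = True"
| "wf_trm Ops ar (Lam t) = wf_trm Ops ar t"
| "wf_trm Ops ar (App s t) = (wf_trm Ops ar s \<and> wf_trm Ops ar t)"
| "wf_trm Ops ar (Op f ts) = (f \<in> Ops \<and> length ts = ar f \<and> (\<forall>t\<in>set ts. wf_trm Ops ar t))"

fun lift :: "nat \<Rightarrow> 'op trm \<Rightarrow> 'op trm" where
  "lift k (Var i) = (if i < k then Var i else Var (Suc i))"
| "lift k (Lam t) = Lam (lift (Suc k) t)"
| "lift k (App s t) = App (lift k s) (lift k t)"
| "lift k (Op f ts) = Op f (map (lift k) ts)"

fun subst :: "'op trm \<Rightarrow> nat \<Rightarrow> 'op trm \<Rightarrow> 'op trm" where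
  "subst (Var i) k s = (if k < i then Var (i - 1) else if i = k then s else Var i)"
| "subst (Lam t) k s = Lam (subst t (Suc k) (lift 0 s))"
| "subst (App t u) k s = App (subst t k s) (subst u k s)"
| "subst (Op f ts) k s = Op f (map (\<lambda>t. subst t k s) ts)"

fun is_val :: "'op trm \<Rightarrow> bool" where
  "is_val (Var _) = True"
| "is_val (Lam _) = True"
| "is_val _ = False"

text \<open>The two calculi: CbN is beta, CbV is beta_v.\<close>
datatype calc = CbN | CbV

inductive root :: "calc \<Rightarrow> 'op trm \<Rightarrow> 'op trm \<Rightarrow> bool" for c where
  beta: "c = CbN \<Longrightarrow> root c (App (Lam M) N) (subst M 0 N)"
| betav: "c = CbV \<Longrightarrow> is_val V \<Longrightarrow> root c (App (Lam M) V) (subst M 0 V)"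

inductive step :: "calc \<Rightarrow> 'op trm \<Rightarrow> 'op trm \<Rightarrow> bool" for c where
  st_root: "root c M N \<Longrightarrow> step c M N"
| st_lam: "step c M N \<Longrightarrow> step c (Lam M) (Lam N)"
| st_appl: "step c M N \<Longrightarrow> step c (App M P) (App N P)"
| st_appr: "step c M N \<Longrightarrow> step c (App P M) (App P N)"
| st_op: "i < length Ms \<Longrightarrow> step c (Ms ! i) N \<Longrightarrow> step c (Op f Ms) (Op f (Ms[i := N]))"

text \<open>Surface reduction: head contexts for beta, weak contexts for beta_v.\<close>
inductive surf :: "calc \<Rightarrow> 'op trm \<Rightarrow> 'op trm \<Rightarrow> bool" for c where
  sf_root: "root c M N \<Longrightarrow> surf c M N"
| sf_lam: "c = CbN \<Longrightarrow> surf c M N \<Longrightarrow> surf c (Lam M) (Lam N)"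
| sf_appl: "surf c M N \<Longrightarrow> surf c (App M P) (App N P)"
| sf_appr: "c = CbV \<Longrightarrow> surf c M N \<Longrightarrow> surf c (App P M) (App P N)"

definition normal :: "('a \<Rightarrow> 'a \<Rightarrow> bool) \<Rightarrow> 'a \<Rightarrow> bool" where
  "normal R M \<longleftrightarrow> (\<nexists>N. R M N)"

inductive ured :: "calc \<Rightarrow> 'op trm \<Rightarrow> 'op trm \<Rightarrow> bool" for c where
  u_surf: "surf c M M' \<Longrightarrow> ured c M M'"
| u_lam: "normal (surf c) (Lam P) \<Longrightarrow> ured c P P' \<Longrightarrow> ured c (Lam P) (Lam P')"
| u_appl: "normal (surf c) (App P Q) \<Longrightarrow> ured c P P' \<Longrightarrow> ured c (App P Q) (App P' Q)"
| u_appr: "normal (surf c) (App P Q) \<Longrightarrow> ured c Q Q' \<Longrightarrow> ured c (App P Q) (App P Q')"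
| u_op: "normal (surf c) (Op f Ps) \<Longrightarrow> i < length Ps \<Longrightarrow> ured c (Ps ! i) P'
          \<Longrightarrow> ured c (Op f Ps) (Op f (Ps[i := P']))"

inductive pd :: "calc \<Rightarrow> 'op trm \<Rightarrow> 'op trm \<Rightarrow> bool" for c where
  pd_surf: "surf c M M' \<Longrightarrow> pd c M M'"
| pd_nf: "normal (step c) M \<Longrightarrow> pd c M M"
| pd_lam: "normal (surf c) (Lam P) \<Longrightarrow> \<not> normal (step c) (Lam P) \<Longrightarrow> pd c P P'
          \<Longrightarrow> pd c (Lam P) (Lam P')"
| pd_app: "normal (surf c) (App P1 P2) \<Longrightarrow> \<not> normal (step c) (App P1 P2) \<Longrightarrow>
          pd c P1 P1' \<Longrightarrow> pd c P2 P2' \<Longrightarrow> pd c (App P1 P2) (App P1' P2')"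
| pd_op: "normal (surf c) (Op f Ps) \<Longrightarrow> \<not> normal (step c) (Op f Ps) \<Longrightarrow>
          list_all2 (pd c) Ps Ps' \<Longrightarrow> pd c (Op f Ps) (Op f Ps')"

end

theory Submission
  imports Defs
begin

(* Part 1 is an induction on pd: a pd-step is either a surface step or a congruence of pd-steps
   on a surface-normal term, and unbiased reduction is closed under these congruences because it
   preserves surface normality.

   For part 2, call M and N k-joinable if M reduces to some X in exactly k pd-steps and N reduces
   to X by unbiased reduction. Since pd is total and contained in unbiased reduction, k-joinability
   is monotone in k; hence joinable immediate subterms can be brought to a common k and lifted
   along the congruences of pd^k. The claim then follows by induction on the length n of the
   unbiased reduction from M, and inside on M: if M is not surface-normal, its first step is a
   surface step, which pd performs as well; otherwise every step takes place inside an immediate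
   subterm, each of which is reduced in at most n steps. *)

lemma rtranclp_map:
  assumes "R\<^sup>*\<^sup>* a b" and "\<And>x y. R x y \<Longrightarrow> S (f x) (f y)"
  shows "S\<^sup>*\<^sup>* (f a) (f b)"
  using assms(1)
  by (induction rule: rtranclp_induct) (auto intro: rtranclp.rtrancl_into_rtrancl assms(2))

lemma normal_surf_Var: "normal (surf c) (Var i)"
  unfolding normal_def by (auto elim: surf.cases root.cases)

lemma normal_surf_Op: "normal (surf c) (Op f Ps)"
  unfolding normal_def by (auto elim: surf.cases root.cases)

lemma normal_surf_Lam: "normal (surf c) (Lam P) \<longleftrightarrow> (c = CbN \<longrightarrow> normal (surf c) P)"
  unfolding normal_def by (auto elim: surf.cases root.cases intro: surf.intros)

lemma surf_AppE:
  assumes "surf c (App P Q) N"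
  obtains R where "P = Lam R" and "c = CbN \<or> is_val Q"
    | P' where "surf c P P'"
    | Q' where "c = CbV" and "surf c Q Q'"
  using assms by (cases rule: surf.cases) (auto elim: root.cases)

lemma normal_surf_App:
  "normal (surf c) (App P Q) \<longleftrightarrow>
     normal (surf c) P \<and> (c = CbV \<longrightarrow> normal (surf c) Q) \<and>
     \<not> (\<exists>R. P = Lam R \<and> (c = CbN \<or> is_val Q))"
  unfolding normal_def
  by (cases c) (auto intro: surf.intros root.intros elim!: surf_AppE)

lemma surf_imp_step: "surf c M N \<Longrightarrow> step c M N"
  by (induction rule: surf.induct) (auto intro: step.intros)

lemma ured_not_normal_surf: "ured c M N \<Longrightarrow> \<not> normal (surf c) M \<Longrightarrow> surf c M N"
  by (cases rule: ured.cases) auto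

lemma ured_Var: "\<not> ured c (Var i) N"
  using normal_surf_Var by (auto elim: ured.cases simp: normal_def)

lemma ured_normal_LamE:
  assumes "ured c (Lam P) N" and "normal (surf c) (Lam P)"
  obtains P' where "N = Lam P'" and "ured c P P'"
  using assms by (cases rule: ured.cases) (auto simp: normal_def)

lemma ured_normal_AppE:
  assumes "ured c (App P Q) N" and "normal (surf c) (App P Q)"
  obtains P' where "N = App P' Q" and "ured c P P'"
    | Q' where "N = App P Q'" and "ured c Q Q'"
  using assms by (cases rule: ured.cases) (auto simp: normal_def)

lemma ured_OpE:
  assumes "ured c (Op f Ps) N"
  obtains i P' where "i < length Ps" and "ured c (Ps ! i) P'" and "N = Op f (Ps[i := P'])"
  using assms normal_surf_Op[of c f Ps] by (cases rule: ured.cases) (auto simp: normal_def)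

lemma ured_normal_to_val:
  assumes "ured c M N" and "normal (surf c) M" and "is_val N"
  shows "\<exists>P. M = Lam P"
  using assms by (cases M) (auto simp: ured_Var elim: ured_normal_AppE ured_OpE)

lemma ured_preserves_normal_surf: "ured c M N \<Longrightarrow> normal (surf c) M \<Longrightarrow> normal (surf c) N"
proof (induction rule: ured.induct)
  case (u_surf M M')
  then show ?case by (auto simp: normal_def)
next
  case (u_lam P P')
  then show ?case by (auto simp: normal_surf_Lam)
next
  case (u_appl P Q P')
  then have "normal (surf c) P" by (simp add: normal_surf_App)
  with u_appl show ?case
    using ured_normal_to_val[of c P P'] by (auto simp: normal_surf_App)
next
  case (u_appr P Q Q')
  then show ?case
    using ured_normal_to_val[of c Q Q'] by (cases c) (auto simp: normal_surf_App)
next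
  case (u_op f Ps i P')
  then show ?case by (simp add: normal_surf_Op)
qed

lemma ured_rtranclp_preserves_normal_surf:
  "(ured c)\<^sup>*\<^sup>* M N \<Longrightarrow> normal (surf c) M \<Longrightarrow> normal (surf c) N"
  by (induction rule: rtranclp_induct) (auto intro: ured_preserves_normal_surf)

lemma ured_Lam:
  assumes "ured c P P'"
  shows "ured c (Lam P) (Lam P')"
proof (cases "normal (surf c) (Lam P)")
  case True
  then show ?thesis using assms by (rule u_lam)
next
  case False
  then have "c = CbN" and "\<not> normal (surf c) P" by (auto simp: normal_surf_Lam)
  then show ?thesis using assms by (auto intro: u_surf sf_lam ured_not_normal_surf)
qed

lemma ured_rtranclp_Lam: "(ured c)\<^sup>*\<^sup>* P P' \<Longrightarrow> (ured c)\<^sup>*\<^sup>* (Lam P) (Lam P')"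
  by (erule rtranclp_map[where f = Lam]) (rule ured_Lam)

lemma ured_rtranclp_App_left:
  assumes "(ured c)\<^sup>*\<^sup>* P P'" and "normal (surf c) (App P Q)"
  shows "(ured c)\<^sup>*\<^sup>* (App P Q) (App P' Q)"
  using assms(1)
proof (induction rule: rtranclp_induct)
  case (step P1 P2)
  then have "normal (surf c) (App P1 Q)"
    using assms(2) ured_rtranclp_preserves_normal_surf by blast
  with step show ?case by (meson rtranclp.rtrancl_into_rtrancl u_appl)
qed simp

lemma ured_rtranclp_App_right:
  assumes "(ured c)\<^sup>*\<^sup>* Q Q'" and "normal (surf c) (App P Q)"
  shows "(ured c)\<^sup>*\<^sup>* (App P Q) (App P Q')"
  using assms(1)
proof (induction rule: rtranclp_induct)
  case (step Q1 Q2)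
  then have "normal (surf c) (App P Q1)"
    using assms(2) ured_rtranclp_preserves_normal_surf by blast
  with step show ?case by (meson rtranclp.rtrancl_into_rtrancl u_appr)
qed simp

lemma ured_rtranclp_App:
  assumes "normal (surf c) (App P Q)" and "(ured c)\<^sup>*\<^sup>* P P'" and "(ured c)\<^sup>*\<^sup>* Q Q'"
  shows "(ured c)\<^sup>*\<^sup>* (App P Q) (App P' Q')"
proof -
  have left: "(ured c)\<^sup>*\<^sup>* (App P Q) (App P' Q)"
    using assms(2,1) by (rule ured_rtranclp_App_left)
  then have "normal (surf c) (App P' Q)"
    using assms(1) ured_rtranclp_preserves_normal_surf by blast
  with left show ?thesis
    using assms(3) by (meson ured_rtranclp_App_right rtranclp_trans)
qed

lemma ured_Op_append: "ured c P P' \<Longrightarrow> ured c (Op f (pre @ P # Ps)) (Op f (pre @ P' # Ps))"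
  using u_op[of c f "pre @ P # Ps" "length pre" P']
  by (simp add: normal_surf_Op list_update_append)

lemma ured_rtranclp_Op_append:
  "list_all2 (ured c)\<^sup>*\<^sup>* Ps Ps' \<Longrightarrow> (ured c)\<^sup>*\<^sup>* (Op f (pre @ Ps)) (Op f (pre @ Ps'))"
proof (induction Ps Ps' arbitrary: pre rule: list_all2_induct)
  case (Cons P Ps P' Ps')
  have "(ured c)\<^sup>*\<^sup>* (Op f (pre @ P # Ps)) (Op f (pre @ P' # Ps))"
    using Cons.hyps(1)
    by (rule rtranclp_map[where f = "\<lambda>P. Op f (pre @ P # Ps)"]) (rule ured_Op_append)
  moreover have "(ured c)\<^sup>*\<^sup>* (Op f ((pre @ [P']) @ Ps)) (Op f ((pre @ [P']) @ Ps'))"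
    by (rule Cons.IH)
  ultimately show ?case by simp
qed simp

lemma ured_rtranclp_Op: "list_all2 (ured c)\<^sup>*\<^sup>* Ps Ps' \<Longrightarrow> (ured c)\<^sup>*\<^sup>* (Op f Ps) (Op f Ps')"
  using ured_rtranclp_Op_append[where pre = "[]"] by simp

lemma pd_imp_ured_rtranclp: "pd c M N \<Longrightarrow> (ured c)\<^sup>*\<^sup>* M N"
proof (induction rule: pd.induct)
  case (pd_app P1 P2 P1' P2')
  then show ?case by (simp add: ured_rtranclp_App)
next
  case (pd_op f Ps Ps')
  then have "list_all2 (ured c)\<^sup>*\<^sup>* Ps Ps'" by (auto elim: list_all2_mono)
  then show ?case by (rule ured_rtranclp_Op)
qed (auto intro: u_surf ured_rtranclp_Lam)

lemma pd_rtranclp_imp_ured_rtranclp: "(pd c)\<^sup>*\<^sup>* M N \<Longrightarrow> (ured c)\<^sup>*\<^sup>* M N"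
  by (induction rule: rtranclp_induct) (auto dest: pd_imp_ured_rtranclp)

lemma normal_step_Lam: "normal (step c) (Lam P) \<Longrightarrow> normal (step c) P"
  unfolding normal_def by (auto intro: st_lam)

lemma normal_step_App: "normal (step c) (App P Q) \<Longrightarrow> normal (step c) P \<and> normal (step c) Q"
  unfolding normal_def by (auto intro: st_appl st_appr)

lemma normal_step_Op: "normal (step c) (Op f Ps) \<Longrightarrow> P \<in> set Ps \<Longrightarrow> normal (step c) P"
  unfolding normal_def by (auto simp: in_set_conv_nth intro: st_op)

lemma normal_step_Var: "normal (step c) (Var i)"
  unfolding normal_def by (auto elim: step.cases root.cases)

lemma pd_normal_step: "pd c M N \<Longrightarrow> normal (step c) M \<Longrightarrow> N = M"
  by (cases rule: pd.cases) (auto simp: normal_def dest: surf_imp_step)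

lemma pd_Lam: "normal (surf c) (Lam P) \<Longrightarrow> pd c P P' \<Longrightarrow> pd c (Lam P) (Lam P')"
  by (cases "normal (step c) (Lam P)")
    (auto intro: pd.intros dest: normal_step_Lam pd_normal_step)

lemma pd_App:
  "normal (surf c) (App P Q) \<Longrightarrow> pd c P P' \<Longrightarrow> pd c Q Q' \<Longrightarrow> pd c (App P Q) (App P' Q')"
  by (cases "normal (step c) (App P Q)")
    (auto intro: pd.intros dest: normal_step_App pd_normal_step)

lemma pd_Op:
  assumes "list_all2 (pd c) Ps Ps'"
  shows "pd c (Op f Ps) (Op f Ps')"
proof (cases "normal (step c) (Op f Ps)")
  case True
  from assms have "list_all2 (=) Ps Ps'"
    by (rule list.rel_mono_strong) (metis True normal_step_Op pd_normal_step)
  with True show ?thesis by (simp add: list.rel_eq pd_nf)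
next
  case False
  then show ?thesis using assms by (rule pd_op[OF normal_surf_Op])
qed

lemma pd_total: "\<exists>N. pd c M N"
proof (induction M)
  case (Var i)
  then show ?case using normal_step_Var pd_nf by blast
next
  case (Lam P)
  then show ?case using pd_Lam[of c P] pd_surf[of c "Lam P"] unfolding normal_def by blast
next
  case (App P Q)
  then show ?case using pd_App[of c P Q] pd_surf[of c "App P Q"] unfolding normal_def by blast
next
  case (Op f Ps)
  then obtain g where "\<forall>P\<in>set Ps. pd c P (g P)" by metis
  then have "list_all2 (pd c) Ps (map g Ps)"
    by (simp add: list_all2_map2 list_all2_same)
  then show ?case by (blast intro: pd_Op)
qed

lemma relpowp_pd_Lam:
  "(pd c ^^ k) P P' \<Longrightarrow> normal (surf c) (Lam P) \<Longrightarrow> (pd c ^^ k) (Lam P) (Lam P')"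
proof (induction k arbitrary: P)
  case (Suc k)
  then obtain P1 where P1: "pd c P P1" and "(pd c ^^ k) P1 P'" by (blast elim: relpowp_Suc_E2)
  have step: "pd c (Lam P) (Lam P1)" using Suc.prems(2) P1 by (rule pd_Lam)
  then have "normal (surf c) (Lam P1)"
    using Suc.prems(2) by (blast dest: pd_imp_ured_rtranclp ured_rtranclp_preserves_normal_surf)
  with step \<open>(pd c ^^ k) P1 P'\<close> show ?case using Suc.IH by (blast intro: relpowp_Suc_I2)
qed simp

lemma relpowp_pd_App:
  "(pd c ^^ k) P P' \<Longrightarrow> (pd c ^^ k) Q Q' \<Longrightarrow> normal (surf c) (App P Q) \<Longrightarrow>
    (pd c ^^ k) (App P Q) (App P' Q')"
proof (induction k arbitrary: P Q)
  case (Suc k)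
  then obtain P1 Q1 where P1: "pd c P P1" "(pd c ^^ k) P1 P'" and Q1: "pd c Q Q1" "(pd c ^^ k) Q1 Q'"
    by (blast elim: relpowp_Suc_E2)
  have step: "pd c (App P Q) (App P1 Q1)" using Suc.prems(3) P1(1) Q1(1) by (rule pd_App)
  then have "normal (surf c) (App P1 Q1)"
    using Suc.prems(3) by (blast dest: pd_imp_ured_rtranclp ured_rtranclp_preserves_normal_surf)
  with step P1(2) Q1(2) show ?case using Suc.IH by (blast intro: relpowp_Suc_I2)
qed simp

lemma relpowp_pd_Op: "list_all2 (pd c ^^ k) Ps Ps' \<Longrightarrow> (pd c ^^ k) (Op f Ps) (Op f Ps')"
proof (induction k arbitrary: Ps)
  case 0
  then show ?case by (simp add: list.rel_eq)
next
  case (Suc k)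
  then obtain Qs where "list_all2 (pd c) Ps Qs" and "list_all2 (pd c ^^ k) Qs Ps'"
    unfolding relpowp_Suc_left list.rel_compp by blast
  then show ?case using Suc.IH by (blast intro: relpowp_Suc_I2 pd_Op)
qed

definition pd_joinable_in :: "calc \<Rightarrow> nat \<Rightarrow> 'op trm \<Rightarrow> 'op trm \<Rightarrow> bool" where
  "pd_joinable_in c k M N \<longleftrightarrow> (\<exists>X. (pd c ^^ k) M X \<and> (ured c)\<^sup>*\<^sup>* N X)"

lemma pd_joinable_in_eq: "pd_joinable_in c k = (pd c ^^ k) OO ((ured c)\<^sup>*\<^sup>*)\<inverse>\<inverse>"
  by (auto simp: fun_eq_iff pd_joinable_in_def)

lemma pd_joinable_in_refl: "pd_joinable_in c 0 M M"
  by (auto simp: pd_joinable_in_def)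

lemma pd_joinable_in_surf:
  "surf c M M' \<Longrightarrow> pd_joinable_in c k M' N \<Longrightarrow> pd_joinable_in c (Suc k) M N"
  unfolding pd_joinable_in_def by (blast intro: pd_surf relpowp_Suc_I2)

lemma pd_joinable_in_Suc: "pd_joinable_in c k M N \<Longrightarrow> pd_joinable_in c (Suc k) M N"
proof -
  assume "pd_joinable_in c k M N"
  then obtain X where "(pd c ^^ k) M X" and "(ured c)\<^sup>*\<^sup>* N X"
    by (auto simp: pd_joinable_in_def)
  moreover obtain Y where "pd c X Y" using pd_total by blast
  ultimately show ?thesis unfolding pd_joinable_in_def
    by (blast intro: relpowp_Suc_I rtranclp_trans pd_imp_ured_rtranclp)
qed

lemma pd_joinable_in_mono:
  assumes "pd_joinable_in c k M N" and "k \<le> K"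
  shows "pd_joinable_in c K M N"
  using assms(2) by (induction K rule: dec_induct) (auto intro: assms(1) pd_joinable_in_Suc)

lemma pd_joinable_in_Lam:
  "normal (surf c) (Lam P) \<Longrightarrow> pd_joinable_in c k P P' \<Longrightarrow> pd_joinable_in c k (Lam P) (Lam P')"
  unfolding pd_joinable_in_def by (blast intro: relpowp_pd_Lam ured_rtranclp_Lam)

lemma pd_joinable_in_App:
  assumes "normal (surf c) (App P Q)" and "normal (surf c) (App P' Q')"
    and "pd_joinable_in c k P P'" and "pd_joinable_in c k Q Q'"
  shows "pd_joinable_in c k (App P Q) (App P' Q')"
  using assms unfolding pd_joinable_in_def by (blast intro: relpowp_pd_App ured_rtranclp_App)

lemma pd_joinable_in_Op:
  "list_all2 (pd_joinable_in c k) Ps Ps' \<Longrightarrow> pd_joinable_in c k (Op f Ps) (Op f Ps')"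
  unfolding pd_joinable_in_eq list.rel_compp list.rel_conversep
  by (blast intro: relpowp_pd_Op ured_rtranclp_Op)

lemma list_all2_pd_joinable_in_uniform:
  "list_all2 (\<lambda>P P'. \<exists>k. pd_joinable_in c k P P') Ps Ps' \<Longrightarrow>
    \<exists>k. list_all2 (pd_joinable_in c k) Ps Ps'"
proof (induction rule: list_all2_induct)
  case (Cons P Ps P' Ps')
  then obtain k1 k2 where "pd_joinable_in c k1 P P'" and "list_all2 (pd_joinable_in c k2) Ps Ps'"
    by blast
  then have "pd_joinable_in c (max k1 k2) P P'" and "list_all2 (pd_joinable_in c (max k1 k2)) Ps Ps'"
    by (auto elim!: pd_joinable_in_mono list_all2_mono)
  then show ?case by blast
qed simp

lemma ured_relpowp_Var: "(ured c ^^ n) (Var i) N \<Longrightarrow> N = Var i"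
  by (cases n) (simp, metis relpowp_Suc_E2 ured_Var)

lemma ured_relpowp_normal_Lam:
  "(ured c ^^ n) (Lam P) N \<Longrightarrow> normal (surf c) (Lam P) \<Longrightarrow>
    \<exists>P'. N = Lam P' \<and> (ured c ^^ n) P P'"
proof (induction n arbitrary: N)
  case (Suc n)
  then obtain Y where Y: "(ured c ^^ n) (Lam P) Y" and "ured c Y N" by (blast elim: relpowp_Suc_E)
  with Suc obtain P1 where "Y = Lam P1" and "(ured c ^^ n) P P1" by blast
  moreover have "normal (surf c) Y"
    using Y Suc.prems(2) by (blast dest: relpowp_imp_rtranclp ured_rtranclp_preserves_normal_surf)
  ultimately obtain P' where "N = Lam P'" and "ured c P1 P'"
    using \<open>ured c Y N\<close> by (auto elim: ured_normal_LamE)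
  then show ?case using \<open>(ured c ^^ n) P P1\<close> by (blast intro: relpowp_Suc_I)
qed simp

lemma ured_relpowp_normal_App:
  "(ured c ^^ n) (App P Q) N \<Longrightarrow> normal (surf c) (App P Q) \<Longrightarrow>
    \<exists>P' Q' a b. N = App P' Q' \<and> (ured c ^^ a) P P' \<and> (ured c ^^ b) Q Q' \<and> a + b = n"
proof (induction n arbitrary: N)
  case 0
  then show ?case by (metis add_0 relpowp.simps(1))
next
  case (Suc n)
  then obtain Y where Y: "(ured c ^^ n) (App P Q) Y" and "ured c Y N" by (blast elim: relpowp_Suc_E)
  with Suc obtain P1 Q1 a b where
    "Y = App P1 Q1" and a: "(ured c ^^ a) P P1" and b: "(ured c ^^ b) Q Q1" and "a + b = n"
    by blast
  moreover have "normal (surf c) Y"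
    using Y Suc.prems(2) by (blast dest: relpowp_imp_rtranclp ured_rtranclp_preserves_normal_surf)
  ultimately have "ured c (App P1 Q1) N" and "normal (surf c) (App P1 Q1)"
    using \<open>ured c Y N\<close> by simp_all
  then show ?case
  proof (cases rule: ured_normal_AppE)
    case (1 P')
    with a b \<open>a + b = n\<close> show ?thesis by (metis add_Suc relpowp_Suc_I)
  next
    case (2 Q')
    with a b \<open>a + b = n\<close> show ?thesis by (metis add_Suc_right relpowp_Suc_I)
  qed
qed

lemma ured_relpowp_Op:
  "(ured c ^^ n) (Op f Ps) N \<Longrightarrow>
    \<exists>Ps'. N = Op f Ps' \<and> list_all2 (\<lambda>P P'. \<exists>a\<le>n. (ured c ^^ a) P P') Ps Ps'"
proof (induction n arbitrary: N)
  case 0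
  then show ?case by (auto simp: list_all2_same intro: exI[of _ 0])
next
  case (Suc n)
  then obtain Y where "(ured c ^^ n) (Op f Ps) Y" and "ured c Y N" by (blast elim: relpowp_Suc_E)
  with Suc.IH obtain Qs
    where Qs: "Y = Op f Qs" "list_all2 (\<lambda>P P'. \<exists>a\<le>n. (ured c ^^ a) P P') Ps Qs"
    by blast
  with \<open>ured c Y N\<close> obtain i Q'
    where i: "i < length Qs" "ured c (Qs ! i) Q'" "N = Op f (Qs[i := Q'])"
    by (blast elim: ured_OpE)
  let ?R = "\<lambda>P P'. \<exists>a\<le>Suc n. (ured c ^^ a) P P'"
  have "list_all2 ?R Ps Qs"
    using Qs(2) by (rule list_all2_mono) (blast intro: le_SucI)
  moreover obtain a where "a \<le> n" and "(ured c ^^ a) (Ps ! i) (Qs ! i)"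
    using Qs(2) i(1) by (auto simp: list_all2_conv_all_nth)
  then have "?R (Ps ! i) Q'" using i(2) by (metis Suc_le_mono relpowp_Suc_I)
  ultimately have "list_all2 ?R (Ps[i := Ps ! i]) (Qs[i := Q'])"
    by (rule list_all2_update_cong)
  then show ?case using i(3) by auto
qed

lemma ured_relpowp_pd_joinable_not_normal_surf:
  fixes M N :: "'op trm"
  assumes shorter: "\<And>m' (M' :: 'op trm) N'. m' < n \<Longrightarrow> (ured c ^^ m') M' N' \<Longrightarrow>
      \<exists>k. pd_joinable_in c k M' N'"
    and "m \<le> n" and "\<not> normal (surf c) M" and "(ured c ^^ m) M N"
  shows "\<exists>k. pd_joinable_in c k M N"
proof (cases m)
  case 0
  then show ?thesis using assms(4) pd_joinable_in_refl by fastforce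
next
  case (Suc m')
  then obtain M' where "surf c M M'" and "(ured c ^^ m') M' N"
    using assms(3,4) by (blast elim: relpowp_Suc_E2 intro: ured_not_normal_surf)
  moreover have "m' < n" using Suc \<open>m \<le> n\<close> by simp
  ultimately show ?thesis using shorter by (blast intro: pd_joinable_in_surf)
qed

lemma ured_relpowp_pd_joinable_from_shorter:
  fixes M N :: "'op trm"
  assumes shorter: "\<And>m' (M' :: 'op trm) N'. m' < n \<Longrightarrow> (ured c ^^ m') M' N' \<Longrightarrow>
      \<exists>k. pd_joinable_in c k M' N'"
  shows "(ured c ^^ m) M N \<Longrightarrow> m \<le> n \<Longrightarrow> \<exists>k. pd_joinable_in c k M N"
proof (induction M arbitrary: m N)
  case (Var i)
  then show ?case using pd_joinable_in_refl by (blast dest: ured_relpowp_Var)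
next
  case (Lam P)
  show ?case
  proof (cases "normal (surf c) (Lam P)")
    case True
    with Lam.prems obtain P' where "N = Lam P'" and "(ured c ^^ m) P P'"
      by (blast dest: ured_relpowp_normal_Lam)
    with Lam.IH Lam.prems(2) True show ?thesis by (blast intro: pd_joinable_in_Lam)
  next
    case False
    with shorter Lam.prems(2) show ?thesis
      using Lam.prems(1) by (rule ured_relpowp_pd_joinable_not_normal_surf)
  qed
next
  case (App P Q)
  show ?case
  proof (cases "normal (surf c) (App P Q)")
    case True
    with App.prems obtain P' Q' a b
      where N: "N = App P' Q'" and "(ured c ^^ a) P P'" "(ured c ^^ b) Q Q'" "a + b = m"
      by (blast dest: ured_relpowp_normal_App)
    with App.IH App.prems(2) obtain k1 k2
      where "pd_joinable_in c k1 P P'" and "pd_joinable_in c k2 Q Q'"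
      by (metis le_add1 le_add2 order_trans)
    then have "pd_joinable_in c (max k1 k2) P P'" and "pd_joinable_in c (max k1 k2) Q Q'"
      by (auto elim: pd_joinable_in_mono)
    moreover have "normal (surf c) N"
      using App.prems(1) True
      by (blast dest: relpowp_imp_rtranclp ured_rtranclp_preserves_normal_surf)
    ultimately show ?thesis using True N by (blast intro: pd_joinable_in_App)
  next
    case False
    with shorter App.prems(2) show ?thesis
      using App.prems(1) by (rule ured_relpowp_pd_joinable_not_normal_surf)
  qed
next
  case (Op f Ps)
  then obtain Ps' where "N = Op f Ps'"
    and Ps': "list_all2 (\<lambda>P P'. \<exists>a\<le>m. (ured c ^^ a) P P') Ps Ps'"
    by (blast dest: ured_relpowp_Op)
  moreover have "list_all2 (\<lambda>P P'. \<exists>k. pd_joinable_in c k P P') Ps Ps'"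
    using Ps' by (rule list.rel_mono_strong) (use Op.IH Op.prems(2) in force)
  ultimately show ?case
    by (blast dest: list_all2_pd_joinable_in_uniform intro: pd_joinable_in_Op)
qed

lemma ured_relpowp_pd_joinable: "(ured c ^^ n) M N \<Longrightarrow> \<exists>k. pd_joinable_in c k M N"
proof (induction n arbitrary: M N rule: less_induct)
  case (less n)
  then show ?case using ured_relpowp_pd_joinable_from_shorter[of n] by blast
qed

theorem mainTheorem14:
  fixes c :: calc and Ops :: "'op set" and ar :: "'op \<Rightarrow> nat"
  shows "(\<forall>M N :: 'op trm. wf_trm Ops ar M \<longrightarrow> pd c M N \<longrightarrow> (ured c)\<^sup>*\<^sup>* M N)
       \<and> (\<forall>M N :: 'op trm. wf_trm Ops ar M \<longrightarrow> (pd c)\<^sup>*\<^sup>* M N \<longrightarrow> (ured c)\<^sup>*\<^sup>* M N)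
       \<and> (\<forall>M N :: 'op trm. wf_trm Ops ar M \<longrightarrow> (ured c)\<^sup>*\<^sup>* M N \<longrightarrow>
            (\<exists>N'. (pd c)\<^sup>*\<^sup>* M N' \<and> (ured c)\<^sup>*\<^sup>* N N'))"
proof (intro conjI allI impI)
  fix M N :: "'op trm"
  assume "(ured c)\<^sup>*\<^sup>* M N"
  then obtain n where "(ured c ^^ n) M N" by (blast dest: rtranclp_imp_relpowp)
  then obtain k where "pd_joinable_in c k M N" by (blast dest: ured_relpowp_pd_joinable)
  then show "\<exists>N'. (pd c)\<^sup>*\<^sup>* M N' \<and> (ured c)\<^sup>*\<^sup>* N N'"
    unfolding pd_joinable_in_def by (blast dest: relpowp_imp_rtranclp)
qed (simp_all add: pd_imp_ured_rtranclp pd_rtranclp_imp_ured_rtranclp)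

end
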